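(* Let $0<\alpha<1$, $T>0$, $M\in\mathbb{N}^+$, $\Delta t=T/M$, $t_n=n\Delta t$, and let $u\in C^{k+1}[0,T]$, where $1\le i\le k\le 6$ are integers. Let $D^{\alpha}_{k,i}u(t_n)$ be the approximation of the Caputo derivative defined in the context. Then there is a constant $C$ (depending on $u$, $\alpha$, $k$, $i$, but not on $n$ or $\Delta t$) such that for all $k\le n\le M$: (i) if $1\le i<k\le 6$, $$\big|D_{k,i}^{\alpha}u(t_{n})-{}^{C}D^{\alpha}u(t_{n})\big|\le C\big(t_{n-k+i}^{-\alpha-1}\,\Delta t^{k+1}+\Delta t^{k+1-\alpha}\big);$$ (ii) if $i=k\in\{1,\dots,6\}$, $$\big|D_{k,k}^{\alpha}u(t_{n})-{}^{C}D^{\alpha}u(t_{n})\big|\le C\,\Delta t^{k+1-\alpha}.$$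
   Context: Caputo derivative of order $\alpha\in(0,1)$: ${}^{C}D^{\alpha}u(t)=\frac{1}{\Gamma(1-\alpha)}\int_0^t (t-\xi)^{-\alpha}u'(\xi)\,\mathrm{d}\xi$. Let $I_j=[t_{j-1},t_j]$. For integers $m\ge1$, $j$, $q$, let $p^{m}_{j,q}$ denote the polynomial of degree at most $m$ interpolating $u$ at the $m+1$ nodes $t_{j+q-m-1},t_{j+q-m},\dots,t_{j+q-1}$ (considered on $I_j$). For $1\le i\le k\le 6$ and $n\ge k$, let $P^{k}_{i,n}$ be the continuous piecewise polynomial on $[0,t_n]$ given on $I_j$ by: $P^{k}_{i,n}=p^{k-1}_{j,k-j}$ for $1\le j\le k-i$; $P^{k}_{i,n}=p^{k}_{j,i}$ for $k-i+1\le j\le n-i+1$; $P^{k}_{i,n}=p^{k}_{j,n+1-j}$ for $n-i+2\le j\le n$. Then $D^{\alpha}_{k,i}u(t_n)=\frac{1}{\Gamma(1-\alpha)}\int_0^{t_n}(t_n-\xi)^{-\alpha}\frac{\mathrm{d}}{\mathrm{d}\xi}P^{k}_{i,n}(\xi)\,\mathrm{d}\xi$. *)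

theory Defs
  imports "HOL-Analysis.Analysis"
begin

text \<open>u is in C^m[0,T]: derivatives (one-sided at endpoints, i.e. within S) up to order m
  exist on S, and all of D_0 = u, ..., D_m are continuous on S.\<close>
definition Ck_on :: "nat \<Rightarrow> real set \<Rightarrow> (real \<Rightarrow> real) \<Rightarrow> bool" where
  "Ck_on m S u \<longleftrightarrow> (\<exists>D :: nat \<Rightarrow> real \<Rightarrow> real. D 0 = u \<and>
      (\<forall>j<m. \<forall>x\<in>S. (D j has_real_derivative D (Suc j) x) (at x within S)) \<and>
      (\<forall>j\<le>m. continuous_on S (D j)))"

definition caputo :: "real \<Rightarrow> (real \<Rightarrow> real) \<Rightarrow> real \<Rightarrow> real" where
  "caputo \<alpha> u t = (1 / Gamma (1 - \<alpha>)) *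
      integral {0..t} (\<lambda>\<xi>. (t - \<xi>) powr (- \<alpha>) * deriv u \<xi>)"

text \<open>Lagrange interpolation polynomial of degree at most m of u at the m+1 nodes
  t_a, t_(a+1), ..., t_(a+m), where t_l = l * dt.\<close>
definition interp :: "real \<Rightarrow> (real \<Rightarrow> real) \<Rightarrow> int \<Rightarrow> nat \<Rightarrow> real \<Rightarrow> real" where
  "interp dt u a m \<xi> = (\<Sum>l\<in>{0..m}. u (real_of_int (a + int l) * dt) *
      (\<Prod>r\<in>{0..m} - {l}. (\<xi> - real_of_int (a + int r) * dt) /
         (real_of_int (a + int l) * dt - real_of_int (a + int r) * dt)))"

text \<open>p^m_{j,q}: interpolant at nodes t_(j+q-m-1), ..., t_(j+q-1).\<close>
definition pjq :: "real \<Rightarrow> (real \<Rightarrow> real) \<Rightarrow> nat \<Rightarrow> int \<Rightarrow> int \<Rightarrow> real \<Rightarrow> real" where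
  "pjq dt u m j q = interp dt u (j + q - int m - 1) m"

text \<open>Index j of the interval I_j = [t_(j-1), t_j] containing xi (j >= 1).\<close>
definition interval_index :: "real \<Rightarrow> real \<Rightarrow> int" where
  "interval_index dt \<xi> = max 1 \<lceil>\<xi> / dt\<rceil>"

definition Ppw :: "real \<Rightarrow> (real \<Rightarrow> real) \<Rightarrow> nat \<Rightarrow> nat \<Rightarrow> nat \<Rightarrow> real \<Rightarrow> real" where
  "Ppw dt u k i n \<xi> =
     (let j = interval_index dt \<xi> in
      if j \<le> int k - int i then pjq dt u (k - 1) j (int k - j) \<xi>
      else if j \<le> int n - int i + 1 then pjq dt u k j (int i) \<xi>
      else pjq dt u k j (int n + 1 - j) \<xi>)"

definition Dapprox :: "real \<Rightarrow> real \<Rightarrow> (real \<Rightarrow> real) \<Rightarrow> nat \<Rightarrow> nat \<Rightarrow> nat \<Rightarrow> real" where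
  "Dapprox \<alpha> dt u k i n = (1 / Gamma (1 - \<alpha>)) *
      integral {0..real n * dt}
        (\<lambda>\<xi>. (real n * dt - \<xi>) powr (- \<alpha>) * deriv (Ppw dt u k i n) \<xi>)"

end

theory Submission
  imports Defs "HOL-Computational_Algebra.Polynomial"
begin

text \<open>On each grid interval \<open>I\<^sub>j\<close> the scheme replaces \<open>u'\<close> by the derivative of a Lagrange
  interpolant of degree \<open>k\<close> (of degree \<open>k - 1\<close> on the first \<open>k - i\<close> intervals) whose nodes
  cover \<open>I\<^sub>j\<close>; by the higher-order Rolle theorem the interpolation error \<open>P - u\<close> is \<open>O(\<Delta>t\<^sup>k\<^sup>+\<^sup>1)\<close>
  there and its derivative \<open>O(\<Delta>t\<^sup>k)\<close>. On every interval but the last both endpoints are nodes,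
  so \<open>P - u\<close> vanishes at them and an integration by parts moves the derivative onto the kernel
  \<open>(t\<^sub>n - \<xi>)\<^sup>-\<^sup>\<alpha>\<close>. The error on \<open>I\<^sub>j\<close> is then \<open>O(\<Delta>t\<^sup>k\<^sup>+\<^sup>1)\<close> times the increment of the kernel over
  \<open>I\<^sub>j\<close>, and these increments telescope to at most \<open>\<Delta>t\<^sup>-\<^sup>\<alpha>\<close>. On the last interval the kernel integrates
  to \<open>\<Delta>t\<^sup>1\<^sup>-\<^sup>\<alpha>/(1 - \<alpha>)\<close>. The first \<open>k - i\<close> intervals lose one power of \<open>\<Delta>t\<close>, but they lie at
  distance at least \<open>t\<^sub>n\<^sub>-\<^sub>k\<^sub>+\<^sub>i\<close> from \<open>t\<^sub>n\<close>, where the derivative of the kernel is at most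
  \<open>\<alpha> t\<^sub>n\<^sub>-\<^sub>k\<^sub>+\<^sub>i\<^sup>-\<^sup>\<alpha>\<^sup>-\<^sup>1\<close>.\<close>

section \<open>Rolle's theorem and polynomial interpolation\<close>

lemma Rolle_within_Icc:
  fixes f f' :: "real \<Rightarrow> real"
  assumes "c < d" "{c..d} \<subseteq> {a..b}" "f c = 0" "f d = 0"
    and "\<forall>x\<in>{a..b}. (f has_real_derivative f' x) (at x within {a..b})"
  shows "\<exists>z. c < z \<and> z < d \<and> f' z = 0"
proof -
  have "continuous_on {a..b} f"
    using assms(5) by (meson DERIV_continuous continuous_on_eq_continuous_within)
  then have cont: "continuous_on {c..d} f" using assms(2) continuous_on_subset by blast
  have der: "(f has_real_derivative f' x) (at x)" if "c < x" "x < d" for x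
  proof -
    have "a < x" "x < b" using that assms(1,2) by auto
    then show ?thesis using assms(5) that at_within_Icc_at[of a x b]
      by (metis atLeastAtMost_iff less_eq_real_def)
  qed
  obtain z where z: "c < z" "z < d" "DERIV f z :> 0"
    using Rolle[of c d f] assms cont der real_differentiable_def by metis
  then show ?thesis using der[OF z(1,2)] DERIV_unique by blast
qed

lemma Rolle_zeros_of_derivative:
  fixes f f' :: "real \<Rightarrow> real"
  assumes "finite Z" "card Z = Suc (Suc m)" "Z \<subseteq> {a..b}" "\<forall>z\<in>Z. f z = 0"
    and "\<forall>x\<in>{a..b}. (f has_real_derivative f' x) (at x within {a..b})"
  obtains W where "finite W" "card W = Suc m" "W \<subseteq> {a..b}" "\<forall>w\<in>W. f' w = 0"
proof -
  define zs where "zs = sorted_list_of_set Z"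
  have len: "length zs = Suc (Suc m)" using assms(1,2) by (simp add: zs_def)
  have sorted: "sorted_wrt (<) zs" unfolding zs_def by (rule strict_sorted_list_of_set)
  have inZ: "zs ! l \<in> Z" if "l < Suc (Suc m)" for l
    using that len assms(1) nth_mem by (metis set_sorted_list_of_set zs_def)
  have lt: "zs ! l < zs ! l'" if "l < l'" "l' < Suc (Suc m)" for l l'
    using sorted_wrt_nth_less[OF sorted that(1)] that len by simp
  have "\<exists>w. zs ! l < w \<and> w < zs ! Suc l \<and> f' w = 0" if l: "l < Suc m" for l
  proof (rule Rolle_within_Icc[OF _ _ _ _ assms(5)])
    show "zs ! l < zs ! Suc l" using lt l by simp
    show "{zs ! l..zs ! Suc l} \<subseteq> {a..b}"
      using inZ[of l] inZ[of "Suc l"] l assms(3) by auto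
    show "f (zs ! l) = 0" "f (zs ! Suc l) = 0" using inZ l assms(4) by auto
  qed
  then obtain w where w: "\<And>l. l < Suc m \<Longrightarrow> zs ! l < w l \<and> w l < zs ! Suc l \<and> f' (w l) = 0"
    by metis
  have w_mono: "w l < w l'" if "l < l'" "l' < Suc m" for l l'
  proof -
    have "w l < zs ! Suc l" using w that by auto
    also have "zs ! Suc l \<le> zs ! l'"
      using that lt[of "Suc l" l'] by (cases "Suc l = l'") auto
    also have "\<dots> < w l'" using w that by auto
    finally show ?thesis .
  qed
  have "inj_on w {..<Suc m}"
    by (intro inj_onI) (metis lessThan_iff linorder_neqE_nat order_less_irrefl w_mono)
  then show thesis
  proof (intro that[of "w ` {..<Suc m}"])
    show "w ` {..<Suc m} \<subseteq> {a..b}"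
    proof
      fix x assume "x \<in> w ` {..<Suc m}"
      then obtain l where l: "l < Suc m" "x = w l" by auto
      show "x \<in> {a..b}" using inZ[of l] inZ[of "Suc l"] w[OF l(1)] l assms(3) by force
    qed
  qed (use w in \<open>auto simp: card_image\<close>)
qed

lemma higher_order_Rolle:
  fixes D :: "nat \<Rightarrow> real \<Rightarrow> real"
  assumes "finite Z" "card Z = Suc m" "Z \<subseteq> {a..b}" "\<forall>z\<in>Z. D 0 z = 0"
    and "\<forall>j<m. \<forall>x\<in>{a..b}. (D j has_real_derivative D (Suc j) x) (at x within {a..b})"
  shows "\<exists>\<eta>\<in>{a..b}. D m \<eta> = 0"
  using assms
proof (induction m arbitrary: D Z)
  case 0
  then obtain z where "z \<in> Z" by (metis card.empty ex_in_conv nat.distinct(1))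
  then show ?case using 0 by auto
next
  case (Suc m)
  obtain W where "finite W" "card W = Suc m" "W \<subseteq> {a..b}" "\<forall>w\<in>W. D (Suc 0) w = 0"
    by (rule Rolle_zeros_of_derivative[of Z m a b "D 0" "D (Suc 0)"]) (use Suc.prems in auto)
  then have "\<exists>\<eta>\<in>{a..b}. (\<lambda>j. D (Suc j)) m \<eta> = 0"
    using Suc.prems(5) by (intro Suc.IH) auto
  then show ?case by simp
qed

lemma pderiv_funpow_eq_0:
  fixes p :: "real poly"
  shows "degree p \<le> j \<Longrightarrow> (pderiv ^^ Suc j) p = 0"
proof (induction j arbitrary: p)
  case 0
  then have "p = [:coeff p 0:]" by (metis degree_0_id le_zero_eq)
  then have "pderiv p = pderiv [:coeff p 0:]" by simp
  then have "pderiv p = 0" by (simp add: pderiv_pCons)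
  then show ?case by simp
next
  case (Suc j)
  have "degree (pderiv p) \<le> j" using Suc.prems by (simp add: degree_pderiv)
  then have "(pderiv ^^ Suc j) (pderiv p) = 0" by (rule Suc.IH)
  then show ?case by (simp only: funpow_Suc_right o_def)
qed

lemma pderiv_funpow_degree:
  fixes p :: "real poly"
  shows "degree p = n \<Longrightarrow> (pderiv ^^ n) p = [: fact n * lead_coeff p :]"
proof (induction n arbitrary: p)
  case 0
  then show ?case by (metis degree_0_id fact_0 funpow_0 mult_1)
next
  case (Suc n)
  have d: "degree (pderiv p) = n" using Suc.prems by (simp add: degree_pderiv)
  have lc: "lead_coeff (pderiv p) = of_nat (Suc n) * lead_coeff p"
    using d Suc.prems by (simp add: coeff_pderiv)
  have "(pderiv ^^ Suc n) p = (pderiv ^^ n) (pderiv p)" by (simp only: funpow_Suc_right o_def)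
  also have "\<dots> = [: fact n * lead_coeff (pderiv p) :]" using Suc.IH[OF d] .
  also have "\<dots> = [: fact (Suc n) * lead_coeff p :]" using lc by (simp add: algebra_simps)
  finally show ?case .
qed

lemma interpolation_error:
  fixes Df :: "nat \<Rightarrow> real \<Rightarrow> real" and q :: "real poly"
  assumes der: "\<forall>j<Suc m. \<forall>x\<in>{a..b}. (Df j has_real_derivative Df (Suc j) x) (at x within {a..b})"
    and dq: "degree q \<le> m" and fX: "finite X" and cX: "card X = Suc m" and sX: "X \<subseteq> {a..b}"
    and agree: "\<forall>x\<in>X. Df 0 x = poly q x"
    and B: "\<forall>y\<in>{a..b}. \<bar>Df (Suc m) y\<bar> \<le> B" and xi: "\<xi> \<in> {a..b}"
  shows "\<bar>Df 0 \<xi> - poly q \<xi>\<bar> \<le> B / fact (Suc m) * (\<Prod>x\<in>X. \<bar>\<xi> - x\<bar>)"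
proof (cases "\<xi> \<in> X")
  case True
  have "0 \<le> B" using B xi by (meson abs_ge_zero order_trans)
  then show ?thesis using True agree by (simp add: prod_nonneg)
next
  case False
  define \<omega> where "\<omega> = (\<Prod>x\<in>X. [:-x, 1:])"
  have poly_\<omega>: "poly \<omega> y = (\<Prod>x\<in>X. y - x)" for y by (simp add: \<omega>_def poly_prod)
  have \<omega>_\<xi>: "poly \<omega> \<xi> \<noteq> 0" using False fX by (simp add: poly_\<omega>)
  have deg_\<omega>: "degree \<omega> = Suc m" unfolding \<omega>_def
    by (subst degree_prod_sum_eq) (auto simp: cX)
  have lead_\<omega>: "lead_coeff \<omega> = 1" unfolding \<omega>_def by (simp add: lead_coeff_prod)
  txt \<open>The classical auxiliary function: it vanishes on \<open>X\<close> and at \<open>\<xi>\<close>.\<close>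
  define c where "c = (Df 0 \<xi> - poly q \<xi>) / poly \<omega> \<xi>"
  define G where "G j y = Df j y - poly ((pderiv ^^ j) q) y - c * poly ((pderiv ^^ j) \<omega>) y" for j y
  have "\<exists>\<eta>\<in>{a..b}. G (Suc m) \<eta> = 0"
  proof (rule higher_order_Rolle[of "insert \<xi> X"])
    show "finite (insert \<xi> X)" using fX by simp
    show "card (insert \<xi> X) = Suc (Suc m)" using fX False cX by simp
    show "insert \<xi> X \<subseteq> {a..b}" using xi sX by simp
    show "\<forall>z\<in>insert \<xi> X. G 0 z = 0"
      using agree \<omega>_\<xi> fX by (auto simp: G_def c_def poly_\<omega>)
    show "\<forall>j<Suc m. \<forall>x\<in>{a..b}. (G j has_real_derivative G (Suc j) x) (at x within {a..b})"
    proof (intro allI impI ballI)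
      fix j x assume j: "j < Suc m" and x: "x \<in> {a..b}"
      have poly_der: "((\<lambda>y. poly ((pderiv ^^ j) p) y) has_real_derivative
          poly ((pderiv ^^ Suc j) p) x) (at x within {a..b})" for p
        by (rule has_field_derivative_at_within) simp
      have "(Df j has_real_derivative Df (Suc j) x) (at x within {a..b})" using der j x by auto
      then show "(G j has_real_derivative G (Suc j) x) (at x within {a..b})"
        unfolding G_def by (intro DERIV_diff DERIV_cmult poly_der)
    qed
  qed
  then obtain \<eta> where \<eta>: "\<eta> \<in> {a..b}" "G (Suc m) \<eta> = 0" by blast
  have "(pderiv ^^ Suc m) q = 0" using pderiv_funpow_eq_0 dq by blast
  moreover have "(pderiv ^^ Suc m) \<omega> = [: fact (Suc m) :]"
    using pderiv_funpow_degree[OF deg_\<omega>] lead_\<omega> by simp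
  ultimately have c_eq: "Df (Suc m) \<eta> = c * fact (Suc m)" using \<eta>(2) by (simp add: G_def)
  have "Df 0 \<xi> - poly q \<xi> = c * poly \<omega> \<xi>" using \<omega>_\<xi> by (simp add: c_def)
  then have "\<bar>Df 0 \<xi> - poly q \<xi>\<bar> = \<bar>Df (Suc m) \<eta>\<bar> / fact (Suc m) * (\<Prod>x\<in>X. \<bar>\<xi> - x\<bar>)"
    by (simp add: c_eq poly_\<omega> abs_mult abs_prod)
  also have "\<dots> \<le> B / fact (Suc m) * (\<Prod>x\<in>X. \<bar>\<xi> - x\<bar>)"
    using B \<eta>(1) by (intro mult_right_mono divide_right_mono) (auto simp: prod_nonneg)
  finally show ?thesis .
qed

lemma interpolation_error_Icc:
  fixes Df :: "nat \<Rightarrow> real \<Rightarrow> real" and q :: "real poly"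
  assumes "\<forall>j<Suc m. \<forall>x\<in>{a..b}. (Df j has_real_derivative Df (Suc j) x) (at x within {a..b})"
    and "degree q \<le> m" and fX: "finite X" and cX: "card X = Suc m" and sX: "X \<subseteq> {a..b}"
    and "\<forall>x\<in>X. Df 0 x = poly q x"
    and B: "\<forall>y\<in>{a..b}. \<bar>Df (Suc m) y\<bar> \<le> B" and xi: "\<xi> \<in> {a..b}"
  shows "\<bar>Df 0 \<xi> - poly q \<xi>\<bar> \<le> B * (b - a) ^ Suc m"
proof -
  have B0: "0 \<le> B" using B xi by (meson abs_ge_zero order_trans)
  have len0: "0 \<le> (b - a) ^ Suc m" using xi by simp
  have "(\<Prod>x\<in>X. \<bar>\<xi> - x\<bar>) \<le> (\<Prod>x\<in>X. b - a)"
    using sX xi by (intro prod_mono) (auto simp: subset_iff abs_if)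
  then have prod_le: "(\<Prod>x\<in>X. \<bar>\<xi> - x\<bar>) \<le> (b - a) ^ Suc m" using cX by simp
  have "\<bar>Df 0 \<xi> - poly q \<xi>\<bar> \<le> B / fact (Suc m) * (\<Prod>x\<in>X. \<bar>\<xi> - x\<bar>)"
    by (rule interpolation_error[OF assms])
  also have "\<dots> \<le> B / fact (Suc m) * (b - a) ^ Suc m"
    using prod_le B0 by (intro mult_left_mono) auto
  also have "\<dots> \<le> B * (b - a) ^ Suc m"
  proof (rule mult_right_mono[OF _ len0])
    have "B / fact (Suc m) \<le> B / 1"
      by (rule divide_left_mono) (use B0 fact_ge_1[of "Suc m", where 'a=real] in \<open>auto simp del: fact_Suc\<close>)
    then show "B / fact (Suc m) \<le> B" by simp
  qed
  finally show ?thesis .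
qed

definition lagrange_poly :: "real \<Rightarrow> (real \<Rightarrow> real) \<Rightarrow> int \<Rightarrow> nat \<Rightarrow> real poly" where
  "lagrange_poly dt u a m = (\<Sum>l\<in>{0..m}. smult (u (real_of_int (a + int l) * dt) /
      (\<Prod>r\<in>{0..m} - {l}. (real_of_int (a + int l) * dt - real_of_int (a + int r) * dt)))
      (\<Prod>r\<in>{0..m} - {l}. [: - (real_of_int (a + int r) * dt), 1 :]))"

lemma poly_lagrange_poly: "poly (lagrange_poly dt u a m) \<xi> = interp dt u a m \<xi>"
  unfolding lagrange_poly_def interp_def
  by (simp add: poly_sum poly_prod prod_dividef)

lemma degree_lagrange_poly: "degree (lagrange_poly dt u a m) \<le> m"
  unfolding lagrange_poly_def
proof (rule degree_sum_le[OF finite_atLeastAtMost])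
  fix l assume l: "l \<in> {0..m}"
  have "degree (\<Prod>r\<in>{0..m} - {l}. [: - (real_of_int (a + int r) * dt), 1 :]) = m"
    using l by (subst degree_prod_sum_eq) auto
  then show "degree (smult (u (real_of_int (a + int l) * dt) /
      (\<Prod>r\<in>{0..m} - {l}. (real_of_int (a + int l) * dt - real_of_int (a + int r) * dt)))
      (\<Prod>r\<in>{0..m} - {l}. [: - (real_of_int (a + int r) * dt), 1 :])) \<le> m"
    by (metis degree_smult_le)
qed

lemma lagrange_poly_node:
  assumes "dt \<noteq> 0" "l0 \<le> m"
  shows "poly (lagrange_poly dt u a m) (real_of_int (a + int l0) * dt) = u (real_of_int (a + int l0) * dt)"
proof -
  let ?x = "\<lambda>l. real_of_int (a + int l) * dt"
  have neq: "?x l - ?x r \<noteq> 0" if "l \<noteq> r" for l r using assms(1) that by simp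
  have "interp dt u a m (?x l0) = (\<Sum>l\<in>{0..m}. u (?x l) *
      (\<Prod>r\<in>{0..m} - {l}. (?x l0 - ?x r) / (?x l - ?x r)))"
    by (simp add: interp_def)
  also have "\<dots> = u (?x l0) * (\<Prod>r\<in>{0..m} - {l0}. (?x l0 - ?x r) / (?x l0 - ?x r))
      + (\<Sum>l\<in>{0..m} - {l0}. u (?x l) * (\<Prod>r\<in>{0..m} - {l}. (?x l0 - ?x r) / (?x l - ?x r)))"
    using assms(2) by (subst sum.remove[of _ l0]) auto
  also have "(\<Sum>l\<in>{0..m} - {l0}. u (?x l) * (\<Prod>r\<in>{0..m} - {l}. (?x l0 - ?x r) / (?x l - ?x r))) = 0"
  proof (rule sum.neutral, rule ballI)
    fix l assume l: "l \<in> {0..m} - {l0}"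
    have "(\<Prod>r\<in>{0..m} - {l}. (?x l0 - ?x r) / (?x l - ?x r)) = 0"
      using l assms(2) by (intro prod_zero) (auto intro!: bexI[of _ l0])
    then show "u (?x l) * (\<Prod>r\<in>{0..m} - {l}. (?x l0 - ?x r) / (?x l - ?x r)) = 0" by simp
  qed
  also have "(\<Prod>r\<in>{0..m} - {l0}. (?x l0 - ?x r) / (?x l0 - ?x r)) = 1"
    by (rule prod.neutral) (use neq in auto)
  finally show ?thesis by (simp add: poly_lagrange_poly)
qed

lemma lagrange_poly_grid_node:
  assumes "0 < dt" "a \<le> int p" "int p \<le> a + int m"
  shows "poly (lagrange_poly dt u a m) (real p * dt) = u (real p * dt)"
proof -
  define l0 where "l0 = nat (int p - a)"
  have e: "a + int l0 = int p" using assms by (simp add: l0_def)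
  have "l0 \<le> m" using assms by (simp add: l0_def)
  from lagrange_poly_node[OF _ this, of dt u a] assms(1) e show ?thesis by simp
qed

lemma lagrange_poly_error:
  fixes D :: "nat \<Rightarrow> real \<Rightarrow> real" and a :: int
  assumes dt: "0 < dt" and a: "0 \<le> a" and aT: "real_of_int (a + int m) * dt \<le> T"
    and der: "\<forall>j<Suc m. \<forall>x\<in>{0..T}. (D j has_real_derivative D (Suc j) x) (at x within {0..T})"
    and B: "\<forall>y\<in>{0..T}. \<bar>D (Suc m) y\<bar> \<le> B"
    and xi: "\<xi> \<in> {real_of_int a * dt .. real_of_int (a + int m) * dt}"
  shows "\<bar>D 0 \<xi> - poly (lagrange_poly dt (D 0) a m) \<xi>\<bar> \<le> B * (real m * dt) ^ Suc m"
proof -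
  let ?lo = "real_of_int a * dt" and ?hi = "real_of_int (a + int m) * dt"
  let ?x = "\<lambda>l::nat. real_of_int (a + int l) * dt"
  have sub: "{?lo..?hi} \<subseteq> {0..T}" using a dt aT by auto
  have "inj_on ?x {0..m}" using dt by (intro inj_onI) simp
  then have card: "card (?x ` {0..m}) = Suc m" by (simp add: card_image)
  have nodes: "?x ` {0..m} \<subseteq> {?lo..?hi}" using dt by (auto intro!: mult_right_mono)
  have "\<bar>D 0 \<xi> - poly (lagrange_poly dt (D 0) a m) \<xi>\<bar> \<le> B * (?hi - ?lo) ^ Suc m"
  proof (rule interpolation_error_Icc[OF _ degree_lagrange_poly _ card nodes _ _ xi])
    show "\<forall>j<Suc m. \<forall>x\<in>{?lo..?hi}. (D j has_real_derivative D (Suc j) x) (at x within {?lo..?hi})"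
      using der sub by (meson DERIV_subset subsetD)
    show "\<forall>x\<in>?x ` {0..m}. D 0 x = poly (lagrange_poly dt (D 0) a m) x"
      using lagrange_poly_node[of dt] dt by auto
    show "\<forall>y\<in>{?lo..?hi}. \<bar>D (Suc m) y\<bar> \<le> B" using B sub by auto
  qed simp
  also have "?hi - ?lo = real m * dt" by (simp add: algebra_simps)
  finally show ?thesis .
qed

text \<open>The error \<open>D 0 - P\<close> vanishes at the \<open>m + 2\<close> nodes, so its derivative vanishes at \<open>m + 1\<close>
  points of the node interval: \<open>pderiv P\<close> interpolates \<open>D 1\<close> there.\<close>
lemma lagrange_poly_deriv_error:
  fixes D :: "nat \<Rightarrow> real \<Rightarrow> real" and a :: int
  assumes dt: "0 < dt" and a: "0 \<le> a" and aT: "real_of_int (a + int (Suc m)) * dt \<le> T"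
    and der: "\<forall>j<Suc (Suc m). \<forall>x\<in>{0..T}. (D j has_real_derivative D (Suc j) x) (at x within {0..T})"
    and B: "\<forall>y\<in>{0..T}. \<bar>D (Suc (Suc m)) y\<bar> \<le> B"
    and xi: "\<xi> \<in> {real_of_int a * dt .. real_of_int (a + int (Suc m)) * dt}"
  shows "\<bar>D 1 \<xi> - poly (pderiv (lagrange_poly dt (D 0) a (Suc m))) \<xi>\<bar> \<le> B * (real (Suc m) * dt) ^ Suc m"
proof -
  let ?lo = "real_of_int a * dt" and ?hi = "real_of_int (a + int (Suc m)) * dt"
  let ?x = "\<lambda>l::nat. real_of_int (a + int l) * dt"
  let ?P = "lagrange_poly dt (D 0) a (Suc m)"
  have sub: "{?lo..?hi} \<subseteq> {0..T}" using a dt aT by auto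
  have der': "\<forall>j<Suc (Suc m). \<forall>x\<in>{?lo..?hi}. (D j has_real_derivative D (Suc j) x) (at x within {?lo..?hi})"
    using der sub by (meson DERIV_subset subsetD)
  have "inj_on ?x {0..Suc m}" using dt by (intro inj_onI) simp
  then have card: "card (?x ` {0..Suc m}) = Suc (Suc m)" by (simp add: card_image)
  have nodes: "?x ` {0..Suc m} \<subseteq> {?lo..?hi}" using dt by (auto intro!: mult_right_mono)
  have err_deriv: "((\<lambda>x. D 0 x - poly ?P x) has_real_derivative D 1 x - poly (pderiv ?P) x)
      (at x within {?lo..?hi})" if "x \<in> {?lo..?hi}" for x
    using der' that by (intro DERIV_diff has_field_derivative_at_within[OF poly_DERIV]) auto
  obtain W where W: "finite W" "card W = Suc m" "W \<subseteq> {?lo..?hi}"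
    and zero: "\<forall>w\<in>W. D 1 w - poly (pderiv ?P) w = 0"
  proof (rule Rolle_zeros_of_derivative[of "?x ` {0..Suc m}" m ?lo ?hi "\<lambda>x. D 0 x - poly ?P x"
        "\<lambda>x. D 1 x - poly (pderiv ?P) x"])
    show "\<forall>z\<in>?x ` {0..Suc m}. D 0 z - poly ?P z = 0"
      using lagrange_poly_node[of dt] dt by auto
  qed (use card nodes err_deriv in auto)
  have "\<bar>(\<lambda>j. D (Suc j)) 0 \<xi> - poly (pderiv ?P) \<xi>\<bar> \<le> B * (?hi - ?lo) ^ Suc m"
  proof (rule interpolation_error_Icc[OF _ _ W _ _ xi])
    show "degree (pderiv ?P) \<le> m"
      using degree_lagrange_poly[of dt "D 0" a "Suc m"] by (simp add: degree_pderiv)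
    show "\<forall>x\<in>W. (\<lambda>j. D (Suc j)) 0 x = poly (pderiv ?P) x" using zero by simp
    show "\<forall>y\<in>{?lo..?hi}. \<bar>(\<lambda>j. D (Suc j)) (Suc m) y\<bar> \<le> B" using B sub by auto
  qed (use der' in auto)
  also have "?hi - ?lo = real (Suc m) * dt" by (simp add: algebra_simps)
  finally show ?thesis by simp
qed

section \<open>The weakly singular kernel\<close>

lemma kernel_has_derivative:
  assumes "\<xi> < t"
  shows "((\<lambda>\<xi>. (t - \<xi>) powr c) has_real_derivative - c * (t - \<xi>) powr (c - 1)) (at \<xi> within S)"
proof -
  have "((\<lambda>\<xi>. (t - \<xi>) powr c) has_real_derivative c * (t - \<xi>) powr (c - 1) * (-1)) (at \<xi>)"
    using assms by (intro has_real_derivative_powr[THEN DERIV_chain2] derivative_eq_intros) auto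
  then show ?thesis by (simp add: has_field_derivative_at_within)
qed

lemma kernel_has_integral:
  fixes \<alpha> :: real
  assumes "\<alpha> < 1" "lo \<le> hi" "hi \<le> t"
  shows "((\<lambda>\<xi>. (t - \<xi>) powr (-\<alpha>)) has_integral
           ((t - lo) powr (1 - \<alpha>) - (t - hi) powr (1 - \<alpha>)) / (1 - \<alpha>)) {lo..hi}"
proof -
  define G where "G = (\<lambda>\<xi>::real. - ((t - \<xi>) powr (1 - \<alpha>)) / (1 - \<alpha>))"
  have "((\<lambda>\<xi>. (t - \<xi>) powr (-\<alpha>)) has_integral (G hi - G lo)) {lo..hi}"
  proof (rule fundamental_theorem_of_calculus_interior[OF assms(2)])
    have "continuous_on {lo..hi} (\<lambda>\<xi>. (t - \<xi>) powr (1 - \<alpha>))"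
      using assms by (intro continuous_on_powr' continuous_on_diff continuous_on_const continuous_on_id) auto
    then show "continuous_on {lo..hi} G"
      unfolding G_def using assms(1) by (intro continuous_on_divide continuous_on_minus continuous_on_const) auto
    fix x assume "x \<in> {lo<..<hi}"
    then have "x < t" using assms by auto
    have "(G has_real_derivative (- (- (1 - \<alpha>) * (t - x) powr (1 - \<alpha> - 1))) / (1 - \<alpha>)) (at x)"
      unfolding G_def by (intro DERIV_cdivide DERIV_minus kernel_has_derivative \<open>x < t\<close>)
    moreover have "(- (- (1 - \<alpha>) * (t - x) powr (1 - \<alpha> - 1))) / (1 - \<alpha>) = (t - x) powr (-\<alpha>)"
      using assms(1) by (simp add: field_simps)
    ultimately show "(G has_vector_derivative (t - x) powr (- \<alpha>)) (at x)"
      by (simp add: has_real_derivative_iff_has_vector_derivative)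
  qed
  then show ?thesis by (simp add: G_def diff_divide_distrib)
qed

lemma kernel_weighted_integrable:
  fixes \<alpha> :: real and g :: "real \<Rightarrow> real"
  assumes "\<alpha> < 1" "lo \<le> hi" "hi \<le> t" and g: "continuous_on {lo..hi} g"
  shows "(\<lambda>\<xi>. (t - \<xi>) powr (-\<alpha>) * g \<xi>) integrable_on {lo..hi}"
proof -
  let ?K = "\<lambda>\<xi>::real. (t - \<xi>) powr (-\<alpha>)"
  have "?K integrable_on {lo..hi}" using kernel_has_integral[OF assms(1-3)] by blast
  then have "?K absolutely_integrable_on {lo..hi}"
    by (rule nonnegative_absolutely_integrable_1) simp
  moreover have "g \<in> borel_measurable (lebesgue_on {lo..hi})"
    by (rule continuous_imp_measurable_on_sets_lebesgue[OF g]) simp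
  moreover have "bounded (g ` {lo..hi})"
    by (rule compact_imp_bounded, rule compact_continuous_image[OF g]) simp
  ultimately have "(\<lambda>x. g x * ?K x) absolutely_integrable_on {lo..hi}"
    by (intro absolutely_integrable_bounded_measurable_product_real) auto
  then show ?thesis by (simp add: set_lebesgue_integral_eq_integral(1) mult.commute)
qed

lemma kernel_weighted_integral_bound:
  fixes \<alpha> :: real and g :: "real \<Rightarrow> real"
  assumes "\<alpha> < 1" "lo \<le> hi" "hi \<le> t" and g: "continuous_on {lo..hi} g"
    and B: "\<forall>x\<in>{lo..hi}. \<bar>g x\<bar> \<le> B"
  shows "\<bar>integral {lo..hi} (\<lambda>\<xi>. (t - \<xi>) powr (-\<alpha>) * g \<xi>)\<bar>
           \<le> B * (((t - lo) powr (1 - \<alpha>) - (t - hi) powr (1 - \<alpha>)) / (1 - \<alpha>))"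
proof -
  let ?K = "\<lambda>\<xi>::real. (t - \<xi>) powr (-\<alpha>)"
  note K_int = kernel_has_integral[OF assms(1-3)]
  have "\<bar>integral {lo..hi} (\<lambda>\<xi>. ?K \<xi> * g \<xi>)\<bar> \<le> integral {lo..hi} (\<lambda>x. ?K x * B)"
    using integral_norm_bound_integral[OF kernel_weighted_integrable[OF assms(1-4)]
        integrable_on_mult_left[OF has_integral_integrable[OF K_int]]] B
    by (simp add: abs_mult mult_left_mono)
  also have "\<dots> = B * (((t - lo) powr (1 - \<alpha>) - (t - hi) powr (1 - \<alpha>)) / (1 - \<alpha>))"
    using integral_mult_left[of "{lo..hi}" ?K B] integral_unique[OF K_int] by (simp add: mult.commute)
  finally show ?thesis .
qed

lemma kernel_integral_by_parts:
  fixes \<alpha> :: real and E E' :: "real \<Rightarrow> real"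
  assumes "lo \<le> hi" "hi < t"
    and dE: "\<forall>x\<in>{lo..hi}. (E has_real_derivative E' x) (at x within {lo..hi})"
    and E0: "E lo = 0" "E hi = 0"
  shows "((\<lambda>\<xi>. (t - \<xi>) powr (-\<alpha>) * E' \<xi>) has_integral
           - integral {lo..hi} (\<lambda>\<xi>. \<alpha> * (t - \<xi>) powr (-\<alpha> - 1) * E \<xi>)) {lo..hi}"
proof -
  define K where "K \<xi> = (t - \<xi>) powr (-\<alpha>)" for \<xi>
  define K' where "K' \<xi> = \<alpha> * (t - \<xi>) powr (-\<alpha> - 1)" for \<xi>
  have pos: "0 < t - x" if "x \<in> {lo..hi}" for x using that assms(2) by auto
  have dK: "(K has_real_derivative K' x) (at x within {lo..hi})" if "x \<in> {lo..hi}" for x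
    unfolding K_def[abs_def] K'_def using kernel_has_derivative[of x t "-\<alpha>"] pos[OF that] by simp
  have "continuous_on {lo..hi} E"
    using dE by (meson DERIV_continuous continuous_on_eq_continuous_within)
  moreover have "continuous_on {lo..hi} K'"
    unfolding K'_def[abs_def] by (intro continuous_intros) (use pos in force)
  ultimately have I: "(\<lambda>x. K' x * E x) integrable_on {lo..hi}"
    by (intro integrable_continuous_interval continuous_on_mult)
  have "((\<lambda>x. K' x * E x + E' x * K x) has_integral (K hi * E hi - K lo * E lo)) {lo..hi}"
  proof (rule fundamental_theorem_of_calculus[OF assms(1)])
    fix x assume x: "x \<in> {lo..hi}"
    have "((\<lambda>x. K x * E x) has_real_derivative K' x * E x + E' x * K x) (at x within {lo..hi})"
      by (rule DERIV_mult[OF dK[OF x]]) (use dE x in auto)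
    then show "((\<lambda>x. K x * E x) has_vector_derivative K' x * E x + E' x * K x) (at x within {lo..hi})"
      by (simp only: has_real_derivative_iff_has_vector_derivative)
  qed
  from has_integral_diff[OF this integrable_integral[OF I]]
  show ?thesis by (simp add: E0 K_def K'_def mult.commute)
qed

lemma kernel_integral_by_parts_bound:
  fixes \<alpha> :: real and E E' :: "real \<Rightarrow> real"
  assumes "0 \<le> \<alpha>" and lh: "lo \<le> hi" "hi < t"
    and dE: "\<forall>x\<in>{lo..hi}. (E has_real_derivative E' x) (at x within {lo..hi})"
    and E0: "E lo = 0" "E hi = 0"
    and B: "\<forall>x\<in>{lo..hi}. \<bar>E x\<bar> \<le> B"
  shows "\<bar>integral {lo..hi} (\<lambda>\<xi>. (t - \<xi>) powr (-\<alpha>) * E' \<xi>)\<bar>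
           \<le> B * ((t - hi) powr (-\<alpha>) - (t - lo) powr (-\<alpha>))"
    and "\<forall>x\<in>{lo..hi}. \<alpha> * (t - x) powr (-\<alpha> - 1) \<le> c \<Longrightarrow>
         \<bar>integral {lo..hi} (\<lambda>\<xi>. (t - \<xi>) powr (-\<alpha>) * E' \<xi>)\<bar> \<le> B * (c * (hi - lo))"
proof -
  define K' where "K' \<xi> = \<alpha> * (t - \<xi>) powr (-\<alpha> - 1)" for \<xi>
  have pos: "0 < t - x" if "x \<in> {lo..hi}" for x using that lh by auto
  have B0: "0 \<le> B" using B lh by (meson abs_ge_zero atLeastAtMost_iff order_refl order_trans)
  have K'_nonneg: "0 \<le> K' x" for x using assms(1) by (simp add: K'_def)
  have cK': "continuous_on {lo..hi} K'"
    unfolding K'_def[abs_def] by (intro continuous_intros) (use pos in force)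
  have "continuous_on {lo..hi} E"
    using dE by (meson DERIV_continuous continuous_on_eq_continuous_within)
  then have I: "(\<lambda>x. K' x * E x) integrable_on {lo..hi}"
    using cK' by (intro integrable_continuous_interval continuous_on_mult)
  have KB: "(\<lambda>x. K' x * B) integrable_on {lo..hi}"
    using cK' by (intro integrable_continuous_interval continuous_on_mult continuous_on_const)
  have "\<bar>integral {lo..hi} (\<lambda>\<xi>. (t - \<xi>) powr (-\<alpha>) * E' \<xi>)\<bar> = norm (integral {lo..hi} (\<lambda>x. K' x * E x))"
    using integral_unique[OF kernel_integral_by_parts[OF lh dE E0, of \<alpha>]] by (simp add: K'_def)
  also have "\<dots> \<le> integral {lo..hi} (\<lambda>x. K' x * B)"
    using integral_norm_bound_integral[OF I KB] B K'_nonneg by (simp add: abs_mult mult_left_mono)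
  finally have bound: "\<bar>integral {lo..hi} (\<lambda>\<xi>. (t - \<xi>) powr (-\<alpha>) * E' \<xi>)\<bar> \<le> integral {lo..hi} (\<lambda>x. K' x * B)" .
  have "(K' has_integral ((t - hi) powr (-\<alpha>) - (t - lo) powr (-\<alpha>))) {lo..hi}"
    unfolding K'_def using kernel_has_derivative[of _ t "-\<alpha>"] pos
    by (intro fundamental_theorem_of_calculus[OF lh(1)])
       (simp add: has_real_derivative_iff_has_vector_derivative[symmetric])
  then have "integral {lo..hi} (\<lambda>x. K' x * B) = B * ((t - hi) powr (-\<alpha>) - (t - lo) powr (-\<alpha>))"
    by (simp only: integral_mult_right integral_unique mult.commute[of _ B])
  then show "\<bar>integral {lo..hi} (\<lambda>\<xi>. (t - \<xi>) powr (-\<alpha>) * E' \<xi>)\<bar>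
           \<le> B * ((t - hi) powr (-\<alpha>) - (t - lo) powr (-\<alpha>))"
    using bound by linarith
  assume c: "\<forall>x\<in>{lo..hi}. \<alpha> * (t - x) powr (-\<alpha> - 1) \<le> c"
  have "integral {lo..hi} (\<lambda>x. K' x * B) \<le> integral {lo..hi} (\<lambda>x. c * B)"
    by (rule integral_le[OF KB]) (use c B0 in \<open>auto simp: K'_def intro: mult_right_mono\<close>)
  also have "\<dots> = B * (c * (hi - lo))" using lh by simp
  finally show "\<bar>integral {lo..hi} (\<lambda>\<xi>. (t - \<xi>) powr (-\<alpha>) * E' \<xi>)\<bar> \<le> B * (c * (hi - lo))"
    using bound by linarith
qed

lemma integral_grid_sum:
  fixes h :: "real \<Rightarrow> real"
  assumes dt: "0 < dt" and I: "\<forall>j\<in>{1..N}. h integrable_on {real (j - 1) * dt .. real j * dt}"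
  shows "h integrable_on {0..real N * dt} \<and>
         integral {0..real N * dt} h = (\<Sum>j=1..N. integral {real (j - 1) * dt .. real j * dt} h)"
  using I
proof (induction N)
  case 0
  then show ?case using integrable_on_refl[of h 0] by simp
next
  case (Suc N)
  have IH: "h integrable_on {0..real N * dt} \<and>
         integral {0..real N * dt} h = (\<Sum>j=1..N. integral {real (j - 1) * dt .. real j * dt} h)"
    using Suc.IH Suc.prems by auto
  have last: "h integrable_on {real N * dt .. real (Suc N) * dt}"
    using bspec[OF Suc.prems, of "Suc N"] by simp
  have le: "0 \<le> real N * dt" "real N * dt \<le> real (Suc N) * dt" using dt by simp_all
  have int: "h integrable_on {0..real (Suc N) * dt}"
    using Henstock_Kurzweil_Integration.integrable_combine[OF le] IH last by blast
  then show ?case using Henstock_Kurzweil_Integration.integral_combine[OF le int] IH by simp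
qed

section \<open>The piecewise interpolant\<close>

text \<open>On \<open>I\<^sub>j\<close> the piecewise interpolant \<open>P\<^sup>k\<^sub>i\<^sub>,\<^sub>n\<close> is the Lagrange polynomial at the nodes
  \<open>t\<^sub>a, \<dots>, t\<^sub>a\<^sub>+\<^sub>m\<close> with \<open>a = piece_start k i n j\<close> and \<open>m = piece_degree k i j\<close>.\<close>
definition piece_degree :: "nat \<Rightarrow> nat \<Rightarrow> nat \<Rightarrow> nat" where
  "piece_degree k i j = (if j + i \<le> k then k - 1 else k)"

definition piece_start :: "nat \<Rightarrow> nat \<Rightarrow> nat \<Rightarrow> nat \<Rightarrow> int" where
  "piece_start k i n j = (if j + i \<le> k then 0
      else if j + i \<le> n + 1 then int j + int i - int k - 1 else int n - int k)"

lemma piece_nodes_bounds: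
  assumes "1 \<le> i" "i \<le> k" "k \<le> n" "1 \<le> j" "j \<le> n"
  shows "0 \<le> piece_start k i n j" "piece_start k i n j \<le> int j - 1"
    and "int j \<le> piece_start k i n j + int (piece_degree k i j)"
    and "piece_start k i n j + int (piece_degree k i j) \<le> int n"
  using assms unfolding piece_start_def piece_degree_def by auto

lemma last_piece_nodes:
  assumes "1 \<le> i" "k \<le> n"
  shows "piece_degree k i n = k" "piece_start k i n n = int n - int k"
  using assms unfolding piece_start_def piece_degree_def by auto

lemma interval_index_eq:
  assumes "0 < dt" "1 \<le> j" "\<xi> \<in> {real (j - 1) * dt <..< real j * dt}"
  shows "interval_index dt \<xi> = int j"
proof -
  have "real (j - 1) < \<xi> / dt" "\<xi> / dt < real j"
    using assms by (auto simp: field_simps)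
  then have "\<lceil>\<xi> / dt\<rceil> = int j"
    using assms(2) by (intro ceiling_unique) (auto simp: of_nat_diff)
  then show ?thesis using assms(2) by (simp add: interval_index_def)
qed

lemma Ppw_eq_piece:
  assumes "0 < dt" "1 \<le> i" "i \<le> k" "1 \<le> j" "\<xi> \<in> {real (j - 1) * dt <..< real j * dt}"
  shows "Ppw dt u k i n \<xi> = poly (lagrange_poly dt u (piece_start k i n j) (piece_degree k i j)) \<xi>"
proof -
  have "interval_index dt \<xi> = int j" using interval_index_eq assms(1,4,5) by blast
  moreover have "int (k - 1) = int k - 1" using assms by simp
  ultimately show ?thesis
    unfolding Ppw_def Let_def pjq_def poly_lagrange_poly piece_start_def piece_degree_def
    by (auto simp: algebra_simps)
qed

lemma deriv_Ppw_eq_piece: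
  assumes "0 < dt" "1 \<le> i" "i \<le> k" "1 \<le> j" "\<xi> \<in> {real (j - 1) * dt <..< real j * dt}"
  shows "deriv (Ppw dt u k i n) \<xi> =
    poly (pderiv (lagrange_poly dt u (piece_start k i n j) (piece_degree k i j))) \<xi>"
proof (rule DERIV_imp_deriv, rule has_field_derivative_transform_within_open[OF poly_DERIV])
  fix y assume "y \<in> {real (j - 1) * dt <..< real j * dt}"
  then show "poly (lagrange_poly dt u (piece_start k i n j) (piece_degree k i j)) y = Ppw dt u k i n y"
    using Ppw_eq_piece[OF assms(1-4)] by simp
qed (use assms(5) in auto)

section \<open>The consistency error of the scheme\<close>

lemma Ck_on_bounded_derivatives:
  assumes "Ck_on m S u" "compact S"
  obtains D B where "D 0 = u"
    and "\<forall>j<m. \<forall>x\<in>S. (D j has_real_derivative D (Suc j) x) (at x within S)"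
    and "\<forall>j\<le>m. continuous_on S (D j)" and "\<forall>j\<le>m. \<forall>x\<in>S. \<bar>D j x\<bar> \<le> B"
proof -
  obtain D where D: "D 0 = u" "\<forall>j<m. \<forall>x\<in>S. (D j has_real_derivative D (Suc j) x) (at x within S)"
    and cont: "\<forall>j\<le>m. continuous_on S (D j)"
    using assms(1) unfolding Ck_on_def by blast
  have "\<forall>j. \<exists>b. j \<le> m \<longrightarrow> (\<forall>x\<in>S. \<bar>D j x\<bar> \<le> b)"
  proof
    fix j
    show "\<exists>b. j \<le> m \<longrightarrow> (\<forall>x\<in>S. \<bar>D j x\<bar> \<le> b)"
    proof (cases "j \<le> m")
      case True
      have "bounded (D j ` S)"
        using cont True assms(2) by (intro compact_imp_bounded compact_continuous_image) auto
      then show ?thesis unfolding bounded_iff by auto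
    qed simp
  qed
  then obtain b where b: "\<And>j x. j \<le> m \<Longrightarrow> x \<in> S \<Longrightarrow> \<bar>D j x\<bar> \<le> b j" by metis
  have "\<bar>D j x\<bar> \<le> (\<Sum>l\<le>m. \<bar>b l\<bar>)" if "j \<le> m" "x \<in> S" for j x
    using b[OF that] member_le_sum[of j "{..m}" "\<lambda>l. \<bar>b l\<bar>"] that(1) by force
  then show thesis using D cont by (intro that) auto
qed

definition scheme_error_const :: "real \<Rightarrow> real \<Rightarrow> nat \<Rightarrow> real" where
  "scheme_error_const \<alpha> B k =
     real k * B * (\<alpha> * real k ^ k + real k ^ (k + 1) + real k ^ k / (1 - \<alpha>)) / Gamma (1 - \<alpha>)"

locale caputo_scheme =
  fixes \<alpha> T dt B :: real and u :: "real \<Rightarrow> real" and D :: "nat \<Rightarrow> real \<Rightarrow> real" and k i n :: nat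
  assumes alpha: "0 < \<alpha>" "\<alpha> < 1" and dt: "0 < dt" and nT: "real n * dt \<le> T"
    and ik: "1 \<le> i" "i \<le> k" "k \<le> n"
    and D0: "D 0 = u"
    and der: "\<forall>j<k+1. \<forall>x\<in>{0..T}. (D j has_real_derivative D (Suc j) x) (at x within {0..T})"
    and cont_D1: "continuous_on {0..T} (D 1)"
    and bounded: "\<forall>j\<le>k+1. \<forall>x\<in>{0..T}. \<bar>D j x\<bar> \<le> B"
begin

definition piece_poly :: "nat \<Rightarrow> real poly" where
  "piece_poly j = lagrange_poly dt u (piece_start k i n j) (piece_degree k i j)"

definition piece_error :: "nat \<Rightarrow> real" where
  "piece_error j = integral {real (j - 1) * dt .. real j * dt}
     (\<lambda>\<xi>. (real n * dt - \<xi>) powr (-\<alpha>) * (poly (pderiv (piece_poly j)) \<xi> - D 1 \<xi>))"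

lemma B_nonneg: "0 \<le> B"
proof -
  have "0 \<le> T" using nT dt ik by (meson mult_nonneg_nonneg of_nat_0_le_iff order_trans less_imp_le)
  then show ?thesis using bounded by (meson abs_ge_zero atLeastAtMost_iff le0 order_refl order_trans)
qed

lemma grid_interval_subset:
  assumes "1 \<le> j" "j \<le> n"
  shows "{real (j - 1) * dt .. real j * dt} \<subseteq> {0..T}"
proof -
  have "real j * dt \<le> real n * dt" using assms dt by (intro mult_right_mono) auto
  then have "real j * dt \<le> T" using nT by linarith
  then show ?thesis using dt by auto
qed

lemma piece_nodes_interval:
  assumes "1 \<le> j" "j \<le> n"
  shows "{real (j - 1) * dt .. real j * dt} \<subseteq>
     {real_of_int (piece_start k i n j) * dt .. real_of_int (piece_start k i n j + int (piece_degree k i j)) * dt}"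
    and "real_of_int (piece_start k i n j + int (piece_degree k i j)) * dt \<le> T"
proof -
  note bounds = piece_nodes_bounds[OF ik assms]
  have "real_of_int (piece_start k i n j) \<le> real (j - 1)" using bounds(2) assms by linarith
  moreover have "real j \<le> real_of_int (piece_start k i n j + int (piece_degree k i j))"
    using bounds(3) by linarith
  ultimately show "{real (j - 1) * dt .. real j * dt} \<subseteq>
     {real_of_int (piece_start k i n j) * dt .. real_of_int (piece_start k i n j + int (piece_degree k i j)) * dt}"
    using dt by (auto intro: order_trans[OF mult_right_mono])
  have "real_of_int (piece_start k i n j + int (piece_degree k i j)) \<le> real n" using bounds(4) by linarith
  then show "real_of_int (piece_start k i n j + int (piece_degree k i j)) * dt \<le> T"
    using dt nT by (meson mult_right_mono less_imp_le order_trans)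
qed

lemma piece_poly_error:
  assumes "1 \<le> j" "j \<le> n" "x \<in> {real (j - 1) * dt .. real j * dt}"
  shows "\<bar>poly (piece_poly j) x - D 0 x\<bar> \<le> B * (real (piece_degree k i j) * dt) ^ Suc (piece_degree k i j)"
proof -
  have "piece_degree k i j \<le> k" by (simp add: piece_degree_def)
  then have "\<bar>D 0 x - poly (lagrange_poly dt (D 0) (piece_start k i n j) (piece_degree k i j)) x\<bar>
      \<le> B * (real (piece_degree k i j) * dt) ^ Suc (piece_degree k i j)"
    using der bounded piece_nodes_interval[OF assms(1,2)] assms(3)
    by (intro lagrange_poly_error[OF dt piece_nodes_bounds(1)[OF ik assms(1,2)]]) auto
  then show ?thesis by (simp add: piece_poly_def D0 abs_minus_commute)
qed

lemma last_piece_deriv_error: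
  assumes "x \<in> {real (n - 1) * dt .. real n * dt}"
  shows "\<bar>poly (pderiv (piece_poly n)) x - D 1 x\<bar> \<le> B * (real k * dt) ^ k"
proof -
  have n: "1 \<le> n" "n \<le> n" using ik by auto
  obtain m where m: "k = Suc m" using ik by (cases k) auto
  note nodes = piece_nodes_interval[OF n, unfolded last_piece_nodes[OF ik(1,3)]]
  have "\<bar>D 1 x - poly (pderiv (lagrange_poly dt (D 0) (int n - int k) (Suc m))) x\<bar>
      \<le> B * (real (Suc m) * dt) ^ Suc m"
    using ik der bounded nodes assms unfolding m
    by (intro lagrange_poly_deriv_error[OF dt]) auto
  then show ?thesis by (simp add: m[symmetric] piece_poly_def last_piece_nodes[OF ik(1,3)] D0 abs_minus_commute)
qed

lemma piece_error_by_parts: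
  assumes j: "1 \<le> j" "j < n"
  shows "\<bar>piece_error j\<bar> \<le> B * (real (piece_degree k i j) * dt) ^ Suc (piece_degree k i j) *
            ((real n * dt - real j * dt) powr (-\<alpha>) - (real n * dt - real (j - 1) * dt) powr (-\<alpha>))"
    and "\<forall>x\<in>{real (j - 1) * dt .. real j * dt}. \<alpha> * (real n * dt - x) powr (-\<alpha> - 1) \<le> c \<Longrightarrow>
         \<bar>piece_error j\<bar> \<le> B * (real (piece_degree k i j) * dt) ^ Suc (piece_degree k i j) * (c * dt)"
proof -
  have jn: "j \<le> n" using j by simp
  note bounds = piece_nodes_bounds[OF ik j(1) jn]
  let ?lo = "real (j - 1) * dt" and ?hi = "real j * dt"
  define E where "E x = poly (piece_poly j) x - D 0 x" for x
  define E' where "E' x = poly (pderiv (piece_poly j)) x - D 1 x" for x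
  have lh: "?lo \<le> ?hi" "?hi < real n * dt" using dt j by auto
  have sub: "{?lo..?hi} \<subseteq> {0..T}" by (rule grid_interval_subset[OF j(1) jn])
  have dE: "\<forall>x\<in>{?lo..?hi}. (E has_real_derivative E' x) (at x within {?lo..?hi})"
  proof
    fix x assume x: "x \<in> {?lo..?hi}"
    have "(D 0 has_real_derivative D 1 x) (at x within {?lo..?hi})"
      using der x sub by (intro DERIV_subset[OF _ sub]) auto
    then show "(E has_real_derivative E' x) (at x within {?lo..?hi})"
      unfolding E_def[abs_def] E'_def by (intro DERIV_diff has_field_derivative_at_within[OF poly_DERIV])
  qed
  have "piece_start k i n j \<le> int (j - 1)" "int (j - 1) \<le> piece_start k i n j + int (piece_degree k i j)"
    using bounds j by auto
  then have E_lo: "E ?lo = 0" using lagrange_poly_grid_node[OF dt] by (simp add: E_def piece_poly_def D0)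
  have E_hi: "E ?hi = 0"
    using bounds lagrange_poly_grid_node[OF dt] by (simp add: E_def piece_poly_def D0)
  note by_parts = kernel_integral_by_parts_bound[OF less_imp_le[OF alpha(1)] lh dE E_lo E_hi]
  have B: "\<forall>x\<in>{?lo..?hi}. \<bar>E x\<bar> \<le> B * (real (piece_degree k i j) * dt) ^ Suc (piece_degree k i j)"
    using piece_poly_error[OF j(1) jn] by (simp add: E_def)
  have error_eq: "piece_error j = integral {?lo..?hi} (\<lambda>\<xi>. (real n * dt - \<xi>) powr (-\<alpha>) * E' \<xi>)"
    by (simp add: piece_error_def E'_def)
  show "\<bar>piece_error j\<bar> \<le> B * (real (piece_degree k i j) * dt) ^ Suc (piece_degree k i j) *
            ((real n * dt - real j * dt) powr (-\<alpha>) - (real n * dt - real (j - 1) * dt) powr (-\<alpha>))"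
    using by_parts(1)[OF B] unfolding error_eq .
  assume "\<forall>x\<in>{?lo..?hi}. \<alpha> * (real n * dt - x) powr (-\<alpha> - 1) \<le> c"
  moreover have "?hi - ?lo = dt" using j by (simp add: of_nat_diff algebra_simps)
  ultimately show "\<bar>piece_error j\<bar> \<le> B * (real (piece_degree k i j) * dt) ^ Suc (piece_degree k i j) * (c * dt)"
    using by_parts(2)[OF B] unfolding error_eq by simp
qed

lemma last_piece_error:
  "\<bar>piece_error n\<bar> \<le> B * (real k * dt) ^ k * (dt powr (1 - \<alpha>) / (1 - \<alpha>))"
proof -
  let ?lo = "real (n - 1) * dt" and ?hi = "real n * dt"
  have n: "1 \<le> n" using ik by simp
  have lh: "?lo \<le> ?hi" "?hi \<le> real n * dt" using dt by auto
  have "continuous_on {?lo..?hi} (\<lambda>x. poly (pderiv (piece_poly n)) x - D 1 x)"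
    using grid_interval_subset[OF n order_refl]
    by (intro continuous_on_diff continuous_on_poly continuous_on_id continuous_on_subset[OF cont_D1])
  then have "\<bar>piece_error n\<bar> \<le> B * (real k * dt) ^ k *
      (((real n * dt - ?lo) powr (1 - \<alpha>) - (real n * dt - ?hi) powr (1 - \<alpha>)) / (1 - \<alpha>))"
    unfolding piece_error_def
    by (rule kernel_weighted_integral_bound[OF alpha(2) lh]) (intro ballI last_piece_deriv_error)
  moreover have "real n * dt - ?lo = dt" using n by (simp add: of_nat_diff algebra_simps)
  ultimately show ?thesis by simp
qed

lemma piece_has_integrals:
  assumes j: "1 \<le> j" "j \<le> n"
  defines "I \<equiv> {real (j - 1) * dt .. real j * dt}"
  shows "((\<lambda>\<xi>. (real n * dt - \<xi>) powr (-\<alpha>) * deriv (Ppw dt u k i n) \<xi>) has_integral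
           integral I (\<lambda>\<xi>. (real n * dt - \<xi>) powr (-\<alpha>) * poly (pderiv (piece_poly j)) \<xi>)) I"
    and "((\<lambda>\<xi>. (real n * dt - \<xi>) powr (-\<alpha>) * deriv u \<xi>) has_integral
           integral I (\<lambda>\<xi>. (real n * dt - \<xi>) powr (-\<alpha>) * D 1 \<xi>)) I"
    and "piece_error j = integral I (\<lambda>\<xi>. (real n * dt - \<xi>) powr (-\<alpha>) * poly (pderiv (piece_poly j)) \<xi>)
           - integral I (\<lambda>\<xi>. (real n * dt - \<xi>) powr (-\<alpha>) * D 1 \<xi>)"
proof -
  let ?K = "\<lambda>\<xi>. (real n * dt - \<xi>) powr (-\<alpha>)"
  have sub: "I \<subseteq> {0..T}" unfolding I_def by (rule grid_interval_subset[OF j])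
  have lh: "real (j - 1) * dt \<le> real j * dt" "real j * dt \<le> real n * dt" using dt j by auto
  have int_poly: "(\<lambda>\<xi>. ?K \<xi> * poly (pderiv (piece_poly j)) \<xi>) integrable_on I"
    unfolding I_def by (intro kernel_weighted_integrable[OF alpha(2) lh] continuous_on_poly continuous_on_id)
  have int_D1: "(\<lambda>\<xi>. ?K \<xi> * D 1 \<xi>) integrable_on I"
    unfolding I_def using continuous_on_subset[OF cont_D1 sub]
    by (intro kernel_weighted_integrable[OF alpha(2) lh]) (simp add: I_def)
  have interior: "x \<in> {real (j - 1) * dt <..< real j * dt}" if "x \<in> I - {real (j - 1) * dt, real j * dt}" for x
    using that by (auto simp: I_def)
  show "((\<lambda>\<xi>. ?K \<xi> * deriv (Ppw dt u k i n) \<xi>) has_integral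
           integral I (\<lambda>\<xi>. ?K \<xi> * poly (pderiv (piece_poly j)) \<xi>)) I"
    by (rule has_integral_spike_finite[of "{real (j - 1) * dt, real j * dt}", OF _ _
          integrable_integral[OF int_poly]])
       (use deriv_Ppw_eq_piece[OF dt ik(1,2) j(1)] interior in \<open>auto simp: piece_poly_def\<close>)
  have "deriv u x = D 1 x" if "x \<in> {real (j - 1) * dt <..< real j * dt}" for x
  proof -
    have "0 \<le> real (j - 1) * dt" using dt by simp
    moreover have "real (j - 1) * dt < x" "x < real j * dt" using that by auto
    ultimately have x: "0 < x" "x < T" using lh(2) nT by linarith+
    then have "(D 0 has_real_derivative D 1 x) (at x within {0..T})" using der by auto
    then show ?thesis using at_within_Icc_at[OF x] D0 DERIV_imp_deriv by fastforce
  qed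
  then show "((\<lambda>\<xi>. ?K \<xi> * deriv u \<xi>) has_integral integral I (\<lambda>\<xi>. ?K \<xi> * D 1 \<xi>)) I"
    by (intro has_integral_spike_finite[of "{real (j - 1) * dt, real j * dt}", OF _ _
          integrable_integral[OF int_D1]]) (use interior in auto)
  have "piece_error j = integral I (\<lambda>\<xi>. ?K \<xi> * poly (pderiv (piece_poly j)) \<xi> - ?K \<xi> * D 1 \<xi>)"
    by (simp add: piece_error_def I_def right_diff_distrib)
  then show "piece_error j = integral I (\<lambda>\<xi>. ?K \<xi> * poly (pderiv (piece_poly j)) \<xi>)
           - integral I (\<lambda>\<xi>. ?K \<xi> * D 1 \<xi>)"
    using integral_diff[OF int_poly int_D1] by simp
qed

lemma caputo_error_eq_sum:
  "Dapprox \<alpha> dt u k i n - caputo \<alpha> u (real n * dt) = (1 / Gamma (1 - \<alpha>)) * (\<Sum>j=1..n. piece_error j)"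
proof -
  let ?K = "\<lambda>\<xi>. (real n * dt - \<xi>) powr (-\<alpha>)"
  let ?I = "\<lambda>j. {real (j - 1) * dt .. real j * dt}"
  let ?scheme = "\<lambda>\<xi>. ?K \<xi> * deriv (Ppw dt u k i n) \<xi>"
  let ?exact = "\<lambda>\<xi>. ?K \<xi> * deriv u \<xi>"
  let ?poly_part = "\<lambda>j. integral (?I j) (\<lambda>\<xi>. ?K \<xi> * poly (pderiv (piece_poly j)) \<xi>)"
  let ?D1_part = "\<lambda>j. integral (?I j) (\<lambda>\<xi>. ?K \<xi> * D 1 \<xi>)"
  note pieces = piece_has_integrals
  have "\<forall>j\<in>{1..n}. ?scheme integrable_on ?I j"
    using has_integral_integrable[OF pieces(1)] by simp
  then have "integral {0..real n * dt} ?scheme = (\<Sum>j=1..n. integral (?I j) ?scheme)"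
    using integral_grid_sum[OF dt] by blast
  also have "\<dots> = (\<Sum>j=1..n. ?poly_part j)"
    by (intro sum.cong refl integral_unique pieces(1)) auto
  finally have scheme: "integral {0..real n * dt} ?scheme = (\<Sum>j=1..n. ?poly_part j)" .
  have "\<forall>j\<in>{1..n}. ?exact integrable_on ?I j"
    using has_integral_integrable[OF pieces(2)] by simp
  then have "integral {0..real n * dt} ?exact = (\<Sum>j=1..n. integral (?I j) ?exact)"
    using integral_grid_sum[OF dt] by blast
  also have "\<dots> = (\<Sum>j=1..n. ?D1_part j)"
    by (intro sum.cong refl integral_unique pieces(2)) auto
  finally have exact: "integral {0..real n * dt} ?exact = (\<Sum>j=1..n. ?D1_part j)" .
  have "(\<Sum>j=1..n. piece_error j) = (\<Sum>j=1..n. ?poly_part j - ?D1_part j)"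
    by (intro sum.cong refl pieces(3)) auto
  also have "\<dots> = integral {0..real n * dt} ?scheme - integral {0..real n * dt} ?exact"
    unfolding scheme exact by (rule sum_subtractf)
  finally show ?thesis unfolding Dapprox_def caputo_def by (simp add: right_diff_distrib)
qed

lemma start_piece_error:
  assumes j: "1 \<le> j" "j < n" "j + i \<le> k"
  shows "\<bar>piece_error j\<bar> \<le> B * (real k * dt) ^ k * (\<alpha> * (real (n - k + i) * dt) powr (-\<alpha> - 1) * dt)"
proof -
  let ?c = "\<alpha> * (real (n - k + i) * dt) powr (-\<alpha> - 1)"
  have "\<alpha> * (real n * dt - x) powr (-\<alpha> - 1) \<le> ?c" if x: "x \<in> {real (j - 1) * dt .. real j * dt}" for x
  proof -
    have "real j * dt \<le> real (k - i) * dt" using j dt by (intro mult_right_mono) auto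
    then have "real (n - k + i) * dt \<le> real n * dt - x"
      using x ik by (auto simp: of_nat_diff algebra_simps)
    moreover have "0 < real (n - k + i) * dt" using ik dt by simp
    ultimately show ?thesis using alpha by (intro mult_left_mono powr_mono2') auto
  qed
  then have "\<bar>piece_error j\<bar> \<le> B * (real (k - 1) * dt) ^ k * (?c * dt)"
    using piece_error_by_parts(2)[OF j(1,2)] j ik by (simp add: piece_degree_def)
  also have "\<dots> \<le> B * (real k * dt) ^ k * (?c * dt)"
    using B_nonneg dt alpha by (intro mult_right_mono mult_left_mono power_mono) auto
  finally show ?thesis .
qed

lemma bulk_piece_error:
  assumes "1 \<le> j" "j < n" "\<not> j + i \<le> k"
  shows "\<bar>piece_error j\<bar> \<le> B * (real k * dt) ^ (k + 1) *
           ((real n * dt - real j * dt) powr (-\<alpha>) - (real n * dt - real (j - 1) * dt) powr (-\<alpha>))"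
  using piece_error_by_parts(1)[OF assms(1,2)] assms(3) by (simp add: piece_degree_def)

lemma sum_piece_error_bound:
  "(\<Sum>j=1..n. \<bar>piece_error j\<bar>)
     \<le> real (k - i) * (B * (real k * dt) ^ k * (\<alpha> * (real (n - k + i) * dt) powr (-\<alpha> - 1) * dt))
       + B * (real k * dt) ^ (k + 1) * dt powr (-\<alpha>)
       + B * (real k * dt) ^ k * (dt powr (1 - \<alpha>) / (1 - \<alpha>))"
proof -
  define X where "X = B * (real k * dt) ^ k * (\<alpha> * (real (n - k + i) * dt) powr (-\<alpha> - 1) * dt)"
  define Y where "Y = B * (real k * dt) ^ (k + 1)"
  define F where "F j = (real n * dt - real j * dt) powr (-\<alpha>)" for j
  have X0: "0 \<le> X" and Y0: "0 \<le> Y" using B_nonneg alpha dt by (simp_all add: X_def Y_def)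
  obtain n' where n': "n = Suc n'" using ik by (cases n) auto
  have F_mono: "F (j - 1) \<le> F j" if "j < n" for j
    unfolding F_def using that dt alpha by (intro powr_mono2') auto
  have each: "\<bar>piece_error j\<bar> \<le> (if j + i \<le> k then X else 0) + Y * (F j - F (j - 1))"
    if "1 \<le> j" "j \<le> n'" for j
  proof (cases "j + i \<le> k")
    case True
    have "0 \<le> Y * (F j - F (j - 1))" using Y0 F_mono[of j] that n' by simp
    then show ?thesis using start_piece_error[of j] True that n' by (simp add: X_def)
  next
    case False
    then show ?thesis using bulk_piece_error[of j] that n' by (simp add: Y_def F_def)
  qed
  have "card {j \<in> {1..n'}. j + i \<le> k} \<le> card {1..k - i}" by (rule card_mono) auto
  then have start: "(\<Sum>j=1..n'. if j + i \<le> k then X else 0) \<le> real (k - i) * X"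
    using X0 by (simp add: sum.inter_filter[symmetric] mult_right_mono)
  have "(\<Sum>j=1..n'. Y * (F j - F (j - 1))) = Y * (F n' - F 0)"
    by (simp add: sum_distrib_left[symmetric] sum_telescope''[of 0 n', simplified])
  also have "\<dots> \<le> Y * dt powr (-\<alpha>)"
    using Y0 by (intro mult_left_mono) (auto simp: F_def n' algebra_simps)
  finally have bulk: "(\<Sum>j=1..n'. Y * (F j - F (j - 1))) \<le> Y * dt powr (-\<alpha>)" .
  have "(\<Sum>j=1..n. \<bar>piece_error j\<bar>) = (\<Sum>j=1..n'. \<bar>piece_error j\<bar>) + \<bar>piece_error n\<bar>" by (simp add: n')
  also have "(\<Sum>j=1..n'. \<bar>piece_error j\<bar>) \<le> (\<Sum>j=1..n'. (if j + i \<le> k then X else 0) + Y * (F j - F (j - 1)))"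
    using each by (intro sum_mono) auto
  finally show ?thesis
    using start bulk last_piece_error unfolding sum.distrib X_def Y_def by linarith
qed

lemma caputo_error_bound:
  "\<bar>Dapprox \<alpha> dt u k i n - caputo \<alpha> u (real n * dt)\<bar>
     \<le> scheme_error_const \<alpha> B k *
        ((if i < k then (real (n - k + i) * dt) powr (-\<alpha> - 1) * dt ^ (k + 1) else 0)
         + dt powr (real k + 1 - \<alpha>))"
proof -
  define P where "P = (if i < k then (real (n - k + i) * dt) powr (-\<alpha> - 1) * dt ^ (k + 1) else 0)"
  define R where "R = real (k - i) * ((real (n - k + i) * dt) powr (-\<alpha> - 1) * dt ^ (k + 1))"
  define Q where "Q = dt powr (real k + 1 - \<alpha>)"
  define a where "a = B * \<alpha> * real k ^ k"
  define b where "b = B * real k ^ (k + 1)"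
  define c where "c = B * real k ^ k / (1 - \<alpha>)"
  have "real k + 1 - \<alpha> = real (k + 1) + (- \<alpha>)" by simp
  then have Q1: "dt ^ (k + 1) * dt powr (-\<alpha>) = Q"
    unfolding Q_def by (simp only: powr_add powr_realpow[OF dt])
  have "real k + 1 - \<alpha> = real k + (1 - \<alpha>)" by simp
  then have Q2: "dt ^ k * dt powr (1 - \<alpha>) = Q"
    unfolding Q_def by (simp only: powr_add powr_realpow[OF dt])
  have "real (k - i) * (B * (real k * dt) ^ k * (\<alpha> * (real (n - k + i) * dt) powr (-\<alpha> - 1) * dt)) = a * R"
    unfolding R_def a_def by (simp add: power_mult_distrib algebra_simps)
  moreover have "B * (real k * dt) ^ (k + 1) * dt powr (-\<alpha>) = b * Q"
    unfolding b_def Q1[symmetric] by (simp only: power_mult_distrib mult_ac)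
  moreover have "B * (real k * dt) ^ k * (dt powr (1 - \<alpha>) / (1 - \<alpha>)) = c * Q"
    unfolding c_def Q2[symmetric] by (simp add: power_mult_distrib)
  ultimately have sum_le: "(\<Sum>j=1..n. \<bar>piece_error j\<bar>) \<le> a * R + b * Q + c * Q"
    using sum_piece_error_bound by linarith
  have nonneg: "0 \<le> a" "0 \<le> b" "0 \<le> c" "0 \<le> P" "0 \<le> Q"
    using B_nonneg alpha dt by (simp_all add: a_def b_def c_def P_def Q_def)
  have "R \<le> real k * P"
  proof (cases "i < k")
    case True
    have "0 \<le> (real (n - k + i) * dt) powr (-\<alpha> - 1) * dt ^ (k + 1)" using dt by simp
    then show ?thesis using True unfolding R_def P_def by (simp add: mult_right_mono)
  qed (use ik in \<open>simp add: R_def P_def\<close>)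
  moreover have "Q \<le> real k * Q" using mult_right_mono[of 1 "real k" Q] nonneg(5) ik by simp
  ultimately have "a * R + b * Q + c * Q \<le> a * (real k * P) + b * (real k * Q) + c * (real k * Q)"
    using nonneg by (intro add_mono mult_left_mono) auto
  also have "\<dots> \<le> real k * (a + b + c) * (P + Q)"
    using nonneg by (simp add: algebra_simps add_increasing add_increasing2)
  finally have coeffs: "a * R + b * Q + c * Q \<le> real k * (a + b + c) * (P + Q)" .
  have G: "0 < Gamma (1 - \<alpha>)" using alpha by simp
  have "\<bar>Dapprox \<alpha> dt u k i n - caputo \<alpha> u (real n * dt)\<bar> \<le> (\<Sum>j=1..n. \<bar>piece_error j\<bar>) / Gamma (1 - \<alpha>)"
    unfolding caputo_error_eq_sum using G sum_abs[of piece_error "{1..n}"]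
    by (simp add: abs_mult divide_right_mono)
  also have "\<dots> \<le> real k * (a + b + c) * (P + Q) / Gamma (1 - \<alpha>)"
    using sum_le coeffs G by (intro divide_right_mono) auto
  also have "\<dots> = scheme_error_const \<alpha> B k * (P + Q)"
    by (simp add: scheme_error_const_def a_def b_def c_def algebra_simps)
  finally show ?thesis by (simp add: P_def Q_def)
qed

end

theorem theorem2p6:
  fixes \<alpha> T :: real and u :: "real \<Rightarrow> real" and k i :: nat
  assumes "0 < \<alpha>" "\<alpha> < 1" "0 < T"
    and "Ck_on (k + 1) {0..T} u"
    and "1 \<le> i" "i \<le> k" "k \<le> 6"
  shows "\<exists>C. \<forall>M::nat. \<forall>n::nat. 1 \<le> M \<longrightarrow> k \<le> n \<longrightarrow> n \<le> M \<longrightarrow>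
           (let dt = T / real M in
             (i < k \<longrightarrow>
                \<bar>Dapprox \<alpha> dt u k i n - caputo \<alpha> u (real n * dt)\<bar>
                  \<le> C * ((real (n - k + i) * dt) powr (- \<alpha> - 1) * dt ^ (k + 1)
                         + dt powr (real k + 1 - \<alpha>))) \<and>
             (i = k \<longrightarrow>
                \<bar>Dapprox \<alpha> dt u k k n - caputo \<alpha> u (real n * dt)\<bar>
                  \<le> C * dt powr (real k + 1 - \<alpha>)))"
proof -
  obtain D B where "D 0 = u"
    and "\<forall>j<k+1. \<forall>x\<in>{0..T}. (D j has_real_derivative D (Suc j) x) (at x within {0..T})"
    and "\<forall>j\<le>k+1. continuous_on {0..T} (D j)"
    and "\<forall>j\<le>k+1. \<forall>x\<in>{0..T}. \<bar>D j x\<bar> \<le> B"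
    using Ck_on_bounded_derivatives[OF assms(4)] by blast
  note derivatives = this
  show ?thesis
  proof (intro exI[of _ "scheme_error_const \<alpha> B k"] allI impI)
    fix M n :: nat assume M: "1 \<le> M" and "k \<le> n" "n \<le> M"
    define dt where "dt = T / real M"
    have dt: "0 < dt" using M assms(3) by (simp add: dt_def)
    have "real n * dt \<le> real M * dt" using \<open>n \<le> M\<close> dt by (intro mult_right_mono) auto
    then have "real n * dt \<le> T" using M by (simp add: dt_def)
    then interpret caputo_scheme \<alpha> T dt B u D k i n
      using assms(1,2,5,6) dt \<open>k \<le> n\<close> derivatives by unfold_locales auto
    show "let dt = T / real M in
             (i < k \<longrightarrow> \<bar>Dapprox \<alpha> dt u k i n - caputo \<alpha> u (real n * dt)\<bar>
                  \<le> scheme_error_const \<alpha> B k * ((real (n - k + i) * dt) powr (- \<alpha> - 1) * dt ^ (k + 1)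
                         + dt powr (real k + 1 - \<alpha>))) \<and>
             (i = k \<longrightarrow> \<bar>Dapprox \<alpha> dt u k k n - caputo \<alpha> u (real n * dt)\<bar>
                  \<le> scheme_error_const \<alpha> B k * dt powr (real k + 1 - \<alpha>))"
      using caputo_error_bound unfolding Let_def dt_def[symmetric] by auto
  qed
qed

end
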